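(* In the setting below, the function $F=F(\theta,m,\bar a)$ is invariant under $W(m)=\{w\in W: w\circ m=m\}$: $F(wx)=F(x)$ for all $w\in W(m)$ and $x\in\check T\otimes\mathbb{C}$.
   Context: $\mathbb{T}$ is the circle group, $\mathbb{T}[n]$ its subgroup of order $n\ge1$. $G$ is a compact connected Lie group with maximal torus $T$, Weyl group $W$, $\check T=\mathrm{Hom}(\mathbb{T},T)$, $\hat T=\mathrm{Hom}(T,\mathbb{T})$; characters are extended $\mathbb{C}$-linearly to $\check T\otimes\mathbb{C}$ and $\mathbb{Z}[\hat T]$ is viewed as functions of $x\in\check T\otimes\mathbb{C}$ via $\chi\mapsto e^{\chi(x)}$. Let $\xi\in H^4(BG;\mathbb{Z})$ be positive definite, with quadratic form $\phi:\check T\to\mathbb{Z}$ ($\phi(m)$ = coefficient of $z^2$ in $(Bm)^*\xi$), $I(a,b)=\phi(a+b)-\phi(a)-\phi(b)$, $\hat I(a)(b)=I(a,b)$. Fix $\tau$ with $\mathrm{Im}\,\tau>0$, $q=e^{2\pi i\tau}$, $C=\mathbb{C}/(2\pi i\mathbb{Z}+2\pi i\tau\mathbb{Z})$. A theta function of level $\xi$ is $\theta\in\mathbb{Z}[\hat T]((q))$, holomorphic in $(x,\tau)$, with $\theta(x+2\pi i\tau m)=e^{-\hat I(m)(x)}q^{-\phi(m)}\theta(x)$ for $m\in\check T$ and $\theta(wx)=\theta(x)$ for $w\in W$. Let $m:\mathbb{T}[n]\to T$ be a homomorphism, $a\in C$ with $na=0$, $\bar a\in\mathbb{C}$ a lift,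 $\ell,k\in\mathbb{Z}$ with $n\bar a=2\pi i\ell+2\pi i\tau k$, and $\bar m\in\check T$ with $\bar m|_{\mathbb{T}[n]}=m$. Define $F(\theta,m,\bar a)(x)=\exp\big(\tfrac{k}{n}\hat I(\bar m)(x)+\tfrac{k}{n}\phi(\bar m)\bar a\big)\theta(x+\bar m\otimes\bar a)$ (independent of the choice of $\bar m$). *)

theory Defs
  imports "HOL-Analysis.Analysis"
begin

text \<open>The rank-r cocharacter lattice of T is int^'r
 (a basis is fixed), its complexification is complex^'r, characters are int^'r paired
 via the dual basis, and T itself is modelled as (unit) complex^'r, a cocharacter
 mbar acting by z -> (z^(mbar_i))_i.\<close>

definition pair :: "int^'r \<Rightarrow> complex^'r \<Rightarrow> complex" where
  "pair chi x = (\<Sum>i\<in>UNIV. of_int (chi$i) * x$i)"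

definition cvec :: "int^'r \<Rightarrow> complex^'r" where
  "cvec v = (\<chi> i. of_int (v$i))"

definition cmat :: "int^'r^'r \<Rightarrow> complex^'r^'r" where
  "cmat w = (\<chi> i j. of_int (w$i$j))"

definition wact :: "int^'r^'r \<Rightarrow> complex^'r \<Rightarrow> complex^'r" where
  "wact w x = cmat w *v x"

definition cochar :: "int^'r \<Rightarrow> complex \<Rightarrow> complex^'r" where
  "cochar v z = (\<chi> i. z powi (v$i))"

definition tact :: "int^'r^'r \<Rightarrow> complex^'r \<Rightarrow> complex^'r" where
  "tact w t = (\<chi> i. \<Prod>j\<in>UNIV. (t$j) powi (w$i$j))"

definition weyl_group :: "(int^'r^'r) set \<Rightarrow> bool" where
  "weyl_group W \<longleftrightarrow> finite W \<and> mat 1 \<in> W \<and> (\<forall>v\<in>W. \<forall>w\<in>W. v ** w \<in> W)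
     \<and> (\<forall>w\<in>W. \<exists>v\<in>W. v ** w = mat 1 \<and> w ** v = mat 1)"

definition stab :: "(int^'r^'r) set \<Rightarrow> nat \<Rightarrow> (complex \<Rightarrow> complex^'r) \<Rightarrow> (int^'r^'r) set" where
  "stab W n m = {w\<in>W. \<forall>z. z ^ n = 1 \<longrightarrow> tact w (m z) = m z}"

definition level_form :: "(int^'r^'r) set \<Rightarrow> (int^'r \<Rightarrow> int) \<Rightarrow> bool" where
  "level_form W \<phi> \<longleftrightarrow>
     (\<exists>c::int^'r^'r. \<forall>v. \<phi> v = (\<Sum>i\<in>UNIV. \<Sum>j\<in>UNIV. c$i$j * v$i * v$j))
     \<and> (\<forall>v. v \<noteq> 0 \<longrightarrow> \<phi> v > 0)
     \<and> (\<forall>w\<in>W. \<forall>v. \<phi> (w *v v) = \<phi> v)"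

definition Iform :: "(int^'r \<Rightarrow> int) \<Rightarrow> int^'r \<Rightarrow> int^'r \<Rightarrow> int" where
  "Iform \<phi> a b = \<phi> (a + b) - \<phi> a - \<phi> b"

definition Ihat :: "(int^'r \<Rightarrow> int) \<Rightarrow> int^'r \<Rightarrow> complex^'r \<Rightarrow> complex" where
  "Ihat \<phi> a x = (\<Sum>i\<in>UNIV. of_int (Iform \<phi> a (axis i 1)) * x$i)"

text \<open>Element of Z[That]((q)) given by integer coefficients c j chi (coefficient of
 q^j e^chi), evaluated at (tau, x).\<close>
definition theta_eval :: "(int \<Rightarrow> int^'r \<Rightarrow> int) \<Rightarrow> complex \<Rightarrow> complex^'r \<Rightarrow> complex" where
  "theta_eval c \<tau> x = (\<Sum>\<^sub>\<infinity>(j, chi)\<in>UNIV.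
      of_int (c j chi) * exp (pair chi x) * exp (2 * of_real pi * \<i> * \<tau> * of_int j))"

definition theta_terms :: "(int \<Rightarrow> int^'r \<Rightarrow> int) \<Rightarrow> complex \<Rightarrow> complex^'r \<Rightarrow> int \<times> (int^'r) \<Rightarrow> complex" where
  "theta_terms c \<tau> x = (\<lambda>(j, chi). of_int (c j chi) * exp (pair chi x) * exp (2 * of_real pi * \<i> * \<tau> * of_int j))"

text \<open>Theta function of level phi: a Laurent series in q (bounded below) with
 coefficients in Z[That] (finitely supported), converging and holomorphic in (x,tau)
 (stated as separate holomorphy in each variable, equivalent to joint holomorphy by
 Hartogs' theorem), quasi-periodic and W-invariant.\<close>
definition is_theta :: "(int^'r^'r) set \<Rightarrow> (int^'r \<Rightarrow> int) \<Rightarrow> (int \<Rightarrow> int^'r \<Rightarrow> int) \<Rightarrow> bool" where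
  "is_theta W \<phi> c \<longleftrightarrow>
     (\<exists>N. \<forall>j<N. \<forall>chi. c j chi = 0)
     \<and> (\<forall>j. finite {chi. c j chi \<noteq> 0})
     \<and> (\<forall>\<tau> x. Im \<tau> > 0 \<longrightarrow> theta_terms c \<tau> x summable_on UNIV)
     \<and> (\<forall>\<tau> x i. Im \<tau> > 0 \<longrightarrow>
          (\<lambda>z. theta_eval c \<tau> (\<chi> j. if j = i then z else x$j)) holomorphic_on UNIV)
     \<and> (\<forall>x. (\<lambda>\<tau>. theta_eval c \<tau> x) holomorphic_on {\<tau>. Im \<tau> > 0})
     \<and> (\<forall>\<tau> x v. Im \<tau> > 0 \<longrightarrow>
          theta_eval c \<tau> (x + (\<chi> i. 2 * of_real pi * \<i> * \<tau> * of_int (v$i)))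
          = exp (- Ihat \<phi> v x) * exp (- 2 * of_real pi * \<i> * \<tau> * of_int (\<phi> v)) * theta_eval c \<tau> x)
     \<and> (\<forall>\<tau> x. \<forall>w\<in>W. Im \<tau> > 0 \<longrightarrow> theta_eval c \<tau> (wact w x) = theta_eval c \<tau> x)"

definition Ffun :: "(int^'r \<Rightarrow> int) \<Rightarrow> (int \<Rightarrow> int^'r \<Rightarrow> int) \<Rightarrow> complex \<Rightarrow> nat \<Rightarrow> int
    \<Rightarrow> int^'r \<Rightarrow> complex \<Rightarrow> complex^'r \<Rightarrow> complex" where
  "Ffun \<phi> c \<tau> n k mbar abar x =
     exp (of_int k / of_nat n * Ihat \<phi> mbar x + of_int k / of_nat n * of_int (\<phi> mbar) * abar)
     * theta_eval c \<tau> (x + (\<chi> i. of_int (mbar$i) * abar))"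

end

theory Submission
  imports Defs
begin

text \<open>
  If \<open>w\<close> fixes \<open>m\<close> on the \<open>n\<close>-torsion of the circle, evaluating at a primitive \<open>n\<close>-th
  root of unity gives \<open>w mbar \<equiv> mbar (mod n)\<close>, so \<open>w mbar\<close> is another lift of \<open>m\<close>. The
  theorem then follows from two facts. First, \<open>F(\<theta>, w mbar, abar)(w x) = F(\<theta>, mbar, abar)(x)\<close>
  by the \<open>W\<close>-invariance of \<open>\<theta>\<close> and \<open>\<phi>\<close>. Second, \<open>F\<close> does not depend on the lift:
  since \<open>n abar = 2\<pi>i l + 2\<pi>i\<tau> k\<close>, replacing \<open>mbar\<close> by \<open>mbar + n u\<close> translates the argument
  of \<open>\<theta>\<close> by the lattice vector \<open>2\<pi>i l u + 2\<pi>i\<tau> k u\<close>, and the quasi-periodicity factor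
  cancels the change of the exponential prefactor up to \<open>exp(2\<pi>i k l \<phi>(u)) = 1\<close>.
\<close>

definition is_quadratic_form :: "(int^'r \<Rightarrow> int) \<Rightarrow> bool" where
  "is_quadratic_form \<phi> \<longleftrightarrow>
     (\<exists>c::int^'r^'r. \<forall>v. \<phi> v = (\<Sum>i\<in>UNIV. \<Sum>j\<in>UNIV. c$i$j * v$i * v$j))"

lemma level_form_imp_quadratic_form: "level_form W \<phi> \<Longrightarrow> is_quadratic_form \<phi>"
  unfolding level_form_def is_quadratic_form_def by blast

lemma level_form_invariant: "level_form W \<phi> \<Longrightarrow> w \<in> W \<Longrightarrow> \<phi> (w *v v) = \<phi> v"
  unfolding level_form_def by blast

lemma Iform_sym: "Iform \<phi> a b = Iform \<phi> b a"
  unfolding Iform_def by (simp add: add.commute)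

lemma quadratic_form_add: "\<phi> (a + b) = \<phi> a + \<phi> b + Iform \<phi> a b"
  unfolding Iform_def by simp

lemma Iform_coefficients:
  assumes "\<forall>v. \<phi> v = (\<Sum>i\<in>UNIV. \<Sum>j\<in>UNIV. c$i$j * v$i * v$j)"
  shows "Iform \<phi> a b = (\<Sum>i\<in>UNIV. \<Sum>j\<in>UNIV. (c$i$j + c$j$i) * a$i * b$j)"
proof -
  have "Iform \<phi> a b = (\<Sum>i\<in>UNIV. \<Sum>j\<in>UNIV. c$i$j * a$i * b$j) + (\<Sum>i\<in>UNIV. \<Sum>j\<in>UNIV. c$i$j * b$i * a$j)"
    unfolding Iform_def assms[rule_format]
    by (simp add: algebra_simps sum.distrib sum_subtractf[symmetric])
  also have "(\<Sum>i\<in>UNIV. \<Sum>j\<in>UNIV. c$i$j * b$i * a$j) = (\<Sum>i\<in>UNIV. \<Sum>j\<in>UNIV. c$j$i * a$i * b$j)"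
    by (subst sum.swap) (simp add: algebra_simps)
  finally show ?thesis by (simp add: algebra_simps sum.distrib)
qed

lemma quadratic_form_scale:
  assumes "is_quadratic_form \<phi>"
  shows "\<phi> (t *s a) = t^2 * \<phi> a"
proof -
  obtain c where c: "\<forall>v. \<phi> v = (\<Sum>i\<in>UNIV. \<Sum>j\<in>UNIV. c$i$j * v$i * v$j)"
    using assms unfolding is_quadratic_form_def by blast
  have "(\<Sum>i\<in>UNIV. \<Sum>j\<in>UNIV. c$i$j * (t *s a)$i * (t *s a)$j)
      = (\<Sum>i\<in>UNIV. \<Sum>j\<in>UNIV. t^2 * (c$i$j * a$i * a$j))"
    by (intro sum.cong refl) (simp add: power2_eq_square algebra_simps)
  then show ?thesis unfolding c[rule_format] by (simp add: sum_distrib_left)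
qed

lemma Iform_add_right:
  assumes "is_quadratic_form \<phi>"
  shows "Iform \<phi> a (b + b') = Iform \<phi> a b + Iform \<phi> a b'"
proof -
  obtain c where c: "\<forall>v. \<phi> v = (\<Sum>i\<in>UNIV. \<Sum>j\<in>UNIV. c$i$j * v$i * v$j)"
    using assms unfolding is_quadratic_form_def by blast
  show ?thesis unfolding Iform_coefficients[OF c] by (simp add: algebra_simps sum.distrib)
qed

lemma Iform_scale_right:
  assumes "is_quadratic_form \<phi>"
  shows "Iform \<phi> a (t *s b) = t * Iform \<phi> a b"
proof -
  obtain c where c: "\<forall>v. \<phi> v = (\<Sum>i\<in>UNIV. \<Sum>j\<in>UNIV. c$i$j * v$i * v$j)"
    using assms unfolding is_quadratic_form_def by blast
  show ?thesis unfolding Iform_coefficients[OF c] by (simp add: algebra_simps sum_distrib_left)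
qed

lemma Iform_add_left:
  assumes "is_quadratic_form \<phi>"
  shows "Iform \<phi> (b + b') a = Iform \<phi> b a + Iform \<phi> b' a"
  using Iform_add_right[OF assms] Iform_sym by metis

lemma Iform_scale_left:
  assumes "is_quadratic_form \<phi>"
  shows "Iform \<phi> (t *s b) a = t * Iform \<phi> b a"
  using Iform_scale_right[OF assms] Iform_sym by metis

lemma Iform_axis_expansion:
  assumes "is_quadratic_form \<phi>"
  shows "Iform \<phi> a b = (\<Sum>j\<in>UNIV. Iform \<phi> a (axis j 1) * b$j)"
proof -
  obtain c where c: "\<forall>v. \<phi> v = (\<Sum>i\<in>UNIV. \<Sum>j\<in>UNIV. c$i$j * v$i * v$j)"
    using assms unfolding is_quadratic_form_def by blast
  have "(\<Sum>j\<in>UNIV. Iform \<phi> a (axis j 1) * b$j)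
      = (\<Sum>j\<in>UNIV. (\<Sum>i\<in>UNIV. (c$i$j + c$j$i) * a$i) * b$j)"
    unfolding Iform_coefficients[OF c] by (simp add: axis_def if_distrib cong: if_cong)
  also have "\<dots> = (\<Sum>i\<in>UNIV. \<Sum>j\<in>UNIV. (c$i$j + c$j$i) * a$i * b$j)"
    by (subst sum.swap) (simp add: sum_distrib_right)
  finally show ?thesis unfolding Iform_coefficients[OF c] by simp
qed

lemma Iform_matrix_invariant:
  assumes "\<And>v. \<phi> (w *v v) = \<phi> v"
  shows "Iform \<phi> (w *v a) (w *v b) = Iform \<phi> a b"
  unfolding Iform_def matrix_vector_right_distrib[symmetric] assms ..

lemma vec_of_int_mult_eq_scale_cvec: "(\<chi> i. of_int (v$i) * s) = s *s cvec v"
  by (simp add: vec_eq_iff cvec_def mult.commute)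

lemma vec_mult_of_int_eq_scale_cvec: "(\<chi> i. s * of_int (v$i)) = s *s cvec v"
  by (simp add: vec_eq_iff cvec_def)

lemma cvec_add: "cvec (a + b) = cvec a + cvec b"
  by (simp add: vec_eq_iff cvec_def)

lemma cvec_scale: "cvec (t *s a) = of_int t *s cvec a"
  by (simp add: vec_eq_iff cvec_def)

lemma wact_add: "wact w (x + y) = wact w x + wact w y"
  by (simp add: wact_def matrix_vector_right_distrib)

lemma wact_scale: "wact w (s *s x) = s *s wact w x"
  by (simp add: wact_def vector_scalar_commute)

lemma wact_cvec: "wact w (cvec v) = cvec (w *v v)"
  by (simp add: vec_eq_iff wact_def cmat_def cvec_def matrix_vector_mult_def of_int_sum)

lemma Ihat_add: "Ihat \<phi> a (x + y) = Ihat \<phi> a x + Ihat \<phi> a y"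
  by (simp add: Ihat_def algebra_simps sum.distrib)

lemma Ihat_scale: "Ihat \<phi> a (s *s x) = s * Ihat \<phi> a x"
  by (simp add: Ihat_def algebra_simps sum_distrib_left)

lemma Ihat_cvec:
  assumes "is_quadratic_form \<phi>"
  shows "Ihat \<phi> a (cvec b) = of_int (Iform \<phi> a b)"
  by (simp add: Ihat_def cvec_def Iform_axis_expansion[OF assms, of a b] of_int_sum)

lemma Ihat_add_left:
  assumes "is_quadratic_form \<phi>"
  shows "Ihat \<phi> (a + b) x = Ihat \<phi> a x + Ihat \<phi> b x"
  by (simp add: Ihat_def Iform_add_left[OF assms] algebra_simps sum.distrib)

lemma Ihat_scale_left:
  assumes "is_quadratic_form \<phi>"
  shows "Ihat \<phi> (t *s a) x = of_int t * Ihat \<phi> a x"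
  by (simp add: Ihat_def Iform_scale_left[OF assms] algebra_simps sum_distrib_left)

lemma Ihat_wact:
  assumes "is_quadratic_form \<phi>" and "\<And>v. \<phi> (w *v v) = \<phi> v"
  shows "Ihat \<phi> (w *v a) (wact w x) = Ihat \<phi> a x"
proof -
  have "Ihat \<phi> (w *v a) (wact w x)
      = (\<Sum>k\<in>UNIV. of_int (Iform \<phi> (w *v a) (axis k 1)) * (\<Sum>j\<in>UNIV. of_int (w$k$j) * x$j))"
    by (simp add: Ihat_def wact_def cmat_def matrix_vector_mult_def)
  also have "\<dots> = (\<Sum>j\<in>UNIV. of_int (\<Sum>k\<in>UNIV. Iform \<phi> (w *v a) (axis k 1) * w$k$j) * x$j)"
    by (simp add: sum_distrib_left sum_distrib_right of_int_sum algebra_simps) (subst sum.swap, simp)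
  also have "\<dots> = (\<Sum>j\<in>UNIV. of_int (Iform \<phi> a (axis j 1)) * x$j)"
  proof (intro sum.cong refl arg_cong2[where f = "(*)"] arg_cong[where f = of_int])
    fix j
    have "(w *v axis j 1) $ k = w$k$j" for k
      by (simp add: matrix_vector_mult_def axis_def if_distrib cong: if_cong)
    then have "(\<Sum>k\<in>UNIV. Iform \<phi> (w *v a) (axis k 1) * w$k$j) = Iform \<phi> (w *v a) (w *v axis j 1)"
      using Iform_axis_expansion[OF assms(1), of "w *v a" "w *v axis j 1"] by simp
    also have "\<dots> = Iform \<phi> a (axis j 1)"
      by (rule Iform_matrix_invariant) (rule assms(2))
    finally show "(\<Sum>k\<in>UNIV. Iform \<phi> (w *v a) (axis k 1) * w$k$j) = Iform \<phi> a (axis j 1)" .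
  qed
  finally show ?thesis by (simp add: Ihat_def)
qed

lemma theta_eval_periodic:
  "theta_eval c \<tau> (x + (2 * of_real pi * \<i>) *s cvec p) = theta_eval c \<tau> x"
proof -
  have "exp (pair chi (x + (2 * of_real pi * \<i>) *s cvec p)) = exp (pair chi x)" for chi
  proof -
    have "pair chi (x + (2 * of_real pi * \<i>) *s cvec p)
        = pair chi x + \<i> * (of_int (\<Sum>i\<in>UNIV. chi$i * p$i) * (of_real pi * 2))"
      by (simp add: pair_def cvec_def algebra_simps sum.distrib sum_distrib_left of_int_sum)
    then show ?thesis by (simp only: exp_plus_2pin)
  qed
  then show ?thesis unfolding theta_eval_def by simp
qed

lemma theta_eval_lattice_translate:
  assumes "is_quadratic_form \<phi>" and "is_theta W \<phi> c" and "Im \<tau> > 0"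
  shows "theta_eval c \<tau> (y + (2 * of_real pi * \<i>) *s cvec p + (2 * of_real pi * \<i> * \<tau>) *s cvec v)
       = exp (- Ihat \<phi> v y - 2 * of_real pi * \<i> * \<tau> * of_int (\<phi> v)) * theta_eval c \<tau> y"
proof -
  define y' where "y' = y + (2 * of_real pi * \<i>) *s cvec p"
  have "theta_eval c \<tau> (y' + (2 * of_real pi * \<i> * \<tau>) *s cvec v)
      = exp (- Ihat \<phi> v y') * exp (- 2 * of_real pi * \<i> * \<tau> * of_int (\<phi> v)) * theta_eval c \<tau> y'"
    using assms(2,3) unfolding is_theta_def vec_mult_of_int_eq_scale_cvec by blast
  moreover have "exp (- Ihat \<phi> v y') = exp (- Ihat \<phi> v y)"
  proof -
    have "- Ihat \<phi> v y' = - Ihat \<phi> v y + \<i> * (of_int (- Iform \<phi> v p) * (of_real pi * 2))"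
      by (simp add: y'_def Ihat_add Ihat_scale Ihat_cvec[OF assms(1)] algebra_simps)
    then show ?thesis by (simp only: exp_plus_2pin)
  qed
  moreover have "theta_eval c \<tau> y' = theta_eval c \<tau> y"
    unfolding y'_def by (rule theta_eval_periodic)
  ultimately show ?thesis by (simp add: y'_def exp_diff exp_minus field_simps)
qed

lemma Ffun_change_lift:
  assumes "is_quadratic_form \<phi>" and "is_theta W \<phi> c" and "Im \<tau> > 0" and "n > 0"
    and abar: "of_nat n * abar = 2 * of_real pi * \<i> * of_int l + 2 * of_real pi * \<i> * \<tau> * of_int k"
  shows "Ffun \<phi> c \<tau> n k (mbar + int n *s u) abar x = Ffun \<phi> c \<tau> n k mbar abar x"
proof -
  define y where "y = x + abar *s cvec mbar"
  define E where "E = of_int k / of_nat n * Ihat \<phi> mbar x + of_int k / of_nat n * of_int (\<phi> mbar) * abar"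
  have "x + abar *s cvec (mbar + int n *s u)
      = y + (2 * of_real pi * \<i>) *s cvec (l *s u) + (2 * of_real pi * \<i> * \<tau>) *s cvec (k *s u)"
    by (simp add: y_def cvec_add cvec_scale scaleR_add_right vector_add_ldistrib
        vector_smult_assoc abar[unfolded mult.commute[of "of_nat n"]] vector_sadd_rdistrib algebra_simps)
  then have theta: "theta_eval c \<tau> (x + abar *s cvec (mbar + int n *s u))
      = exp (- Ihat \<phi> (k *s u) y - 2 * of_real pi * \<i> * \<tau> * of_int (\<phi> (k *s u))) * theta_eval c \<tau> y"
    by (simp add: theta_eval_lattice_translate[OF assms(1-3)])
  have "Ffun \<phi> c \<tau> n k (mbar + int n *s u) abar x
      = exp (of_int k / of_nat n * Ihat \<phi> (mbar + int n *s u) x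
          + of_int k / of_nat n * of_int (\<phi> (mbar + int n *s u)) * abar
          + (- Ihat \<phi> (k *s u) y - 2 * of_real pi * \<i> * \<tau> * of_int (\<phi> (k *s u))))
        * theta_eval c \<tau> y"
    unfolding Ffun_def vec_of_int_mult_eq_scale_cvec theta exp_add by simp
  also have "of_int k / of_nat n * Ihat \<phi> (mbar + int n *s u) x
      + of_int k / of_nat n * of_int (\<phi> (mbar + int n *s u)) * abar
      + (- Ihat \<phi> (k *s u) y - 2 * of_real pi * \<i> * \<tau> * of_int (\<phi> (k *s u)))
      = E + of_int k * of_int (\<phi> u) * (of_nat n * abar - 2 * of_real pi * \<i> * \<tau> * of_int k)"
    using \<open>n > 0\<close>
    by (simp add: E_def y_def quadratic_form_add quadratic_form_scale[OF assms(1)]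
        Ihat_add_left[OF assms(1)] Ihat_scale_left[OF assms(1)] Ihat_add Ihat_scale
        Ihat_cvec[OF assms(1)] Iform_scale_right[OF assms(1)] Iform_scale_left[OF assms(1)]
        Iform_sym[of \<phi> u mbar]
        field_simps power2_eq_square)
  also have "\<dots> = E + \<i> * (of_int (k * l * \<phi> u) * (of_real pi * 2))"
    unfolding abar by (simp add: algebra_simps)
  also have "exp \<dots> * theta_eval c \<tau> y = Ffun \<phi> c \<tau> n k mbar abar x"
    unfolding exp_plus_2pin by (simp add: Ffun_def E_def y_def vec_of_int_mult_eq_scale_cvec)
  finally show ?thesis .
qed

lemma Ffun_wact:
  assumes "level_form W \<phi>" and "is_theta W \<phi> c" and "Im \<tau> > 0" and "w \<in> W"
  shows "Ffun \<phi> c \<tau> n k (w *v mbar) abar (wact w x) = Ffun \<phi> c \<tau> n k mbar abar x"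
proof -
  have "wact w x + abar *s cvec (w *v mbar) = wact w (x + abar *s cvec mbar)"
    by (simp add: wact_add wact_scale wact_cvec)
  moreover have "theta_eval c \<tau> (wact w y) = theta_eval c \<tau> y" for y
    using assms(2-4) unfolding is_theta_def by blast
  ultimately show ?thesis
    unfolding Ffun_def vec_of_int_mult_eq_scale_cvec
    using Ihat_wact[OF level_form_imp_quadratic_form[OF assms(1)] level_form_invariant[OF assms(1,4)]]
    by (simp add: level_form_invariant[OF assms(1,4)])
qed

lemma tact_cochar_exp: "tact w (cochar v (exp \<alpha>)) = cochar (w *v v) (exp \<alpha>)"
  by (simp add: vec_eq_iff tact_def cochar_def exp_power_int exp_sum[symmetric]
      matrix_vector_mult_def of_int_sum sum_distrib_left algebra_simps)

lemma primitive_root_power_int_eq_imp_dvd: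
  assumes "n > 0" and "exp (2 * of_real pi * \<i> / of_nat n) powi a = exp (2 * of_real pi * \<i> / of_nat n) powi b"
  shows "int n dvd a - b"
proof -
  define \<alpha> :: complex where "\<alpha> = 2 * of_real pi * \<i> / of_nat n"
  have "exp (of_int a * \<alpha>) = exp (of_int b * \<alpha>)"
    using assms(2) by (simp add: \<alpha>_def exp_power_int mult.commute)
  then obtain N :: int where "of_int a * \<alpha> = of_int b * \<alpha> + of_int (2 * N) * pi * \<i>"
    using exp_eq by metis
  then have "of_int (a - b) * (2 * of_real pi * \<i>) = of_int (int n * N) * (2 * of_real pi * \<i>)"
    using assms(1) by (simp add: \<alpha>_def field_simps)
  then have "of_int (a - b) = (of_int (int n * N) :: complex)"
    by (simp add: pi_neq_zero)
  then have "a - b = int n * N"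
    using of_int_eq_iff by blast
  then show ?thesis by simp
qed

lemma stab_lift_congruent:
  assumes "n > 0" and "w \<in> stab W n m" and lift: "\<forall>z. z ^ n = 1 \<longrightarrow> m z = cochar mbar z"
  obtains u where "w *v mbar = mbar + int n *s u"
proof -
  define z where "z = exp (2 * of_real pi * \<i> / of_nat n)"
  have "z ^ n = exp (of_nat n * (2 * of_real pi * \<i> / of_nat n))"
    unfolding z_def by (rule exp_of_nat_mult[symmetric])
  also have "of_nat n * (2 * of_real pi * \<i> / of_nat n) = 2 * of_real pi * \<i>"
    using assms(1) by simp
  finally have "z ^ n = 1" by simp
  then have "cochar (w *v mbar) z = cochar mbar z"
    using assms(2) lift tact_cochar_exp[of w mbar] unfolding stab_def by (auto simp: z_def)
  then have "int n dvd (w *v mbar)$i - mbar$i" for i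
    using primitive_root_power_int_eq_imp_dvd[OF assms(1)]
    by (auto simp: vec_eq_iff cochar_def z_def)
  then have "w *v mbar = mbar + int n *s (\<chi> i. ((w *v mbar)$i - mbar$i) div int n)"
    by (simp add: vec_eq_iff)
  then show thesis by (rule that)
qed

theorem lemma5p3:
  fixes W :: "(int^'r^'r) set" and \<phi> :: "int^'r \<Rightarrow> int" and c :: "int \<Rightarrow> int^'r \<Rightarrow> int"
    and \<tau> :: complex and n :: nat and m :: "complex \<Rightarrow> complex^'r" and mbar :: "int^'r"
    and abar :: complex and l k :: int
  assumes "weyl_group W" and "level_form W \<phi>" and "is_theta W \<phi> c"
    and "Im \<tau> > 0" and "n \<ge> 1"
    and "of_nat n * abar = 2 * of_real pi * \<i> * of_int l + 2 * of_real pi * \<i> * \<tau> * of_int k"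
    and "\<forall>z. z ^ n = 1 \<longrightarrow> m z = cochar mbar z"
  shows "\<forall>w\<in>stab W n m. \<forall>x. Ffun \<phi> c \<tau> n k mbar abar (wact w x) = Ffun \<phi> c \<tau> n k mbar abar x"
proof (intro ballI allI)
  fix w x assume w: "w \<in> stab W n m"
  \<comment> \<open>Comparing the lifts \<open>mbar\<close> and \<open>w mbar\<close> avoids \<open>w\<inverse>\<close>.\<close>
  have "n > 0" using assms(5) by simp
  obtain u where u: "w *v mbar = mbar + int n *s u"
    using stab_lift_congruent[OF \<open>n > 0\<close> w assms(7)] .
  have "Ffun \<phi> c \<tau> n k mbar abar (wact w x) = Ffun \<phi> c \<tau> n k (w *v mbar) abar (wact w x)"
    unfolding u using Ffun_change_lift[OF level_form_imp_quadratic_form[OF assms(2)]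
        assms(3,4) \<open>n > 0\<close> assms(6)] by simp
  also have "\<dots> = Ffun \<phi> c \<tau> n k mbar abar x"
    using Ffun_wact[OF assms(2-4)] w unfolding stab_def by blast
  finally show "Ffun \<phi> c \<tau> n k mbar abar (wact w x) = Ffun \<phi> c \<tau> n k mbar abar x" .
qed

end
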